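(* For $t>1$ let $a=\frac{t\theta}{\sqrt{t^2-1}}$, $b=\frac{\theta}{\sqrt{t^2-1}}$, $e_1=(\cos a\cos\phi,\cos a\sin\phi,\sin a\cos\phi,\sin a\sin\phi)$ and $Y_t:\mathbb{R}^2\to\mathbb{R}^6_2$, $Y_t(\theta,\phi)=(e_1,\cos b,\sin b)$. Then $y_t=[Y_t]:\mathbb{R}^2\to Q^4_1$ is a conformal spacelike Willmore immersion (with respect to $z=\theta+i\phi$, for which $Y_t$ is the canonical lift) which is not S-Willmore; its conformal Hopf differential is $\kappa=-\frac{it}{2\sqrt2\sqrt{t^2-1}}(L-R)$. If $t=p/q$ with $p>q\geq1$ coprime integers, $y_t$ descends to a spacelike Willmore torus $\mathbb{R}^2/\Lambda\to Q^4_1$ with $\Lambda$ generated by $(2\pi q\sqrt{t^2-1},0)$ and $(0,2\pi)$, and its Willmore functional is $W(y_t)=\frac{p^2}{\sqrt{p^2-q^2}}\pi^2$; the minimum of these values over all such $p,q$ is $\frac{4}{\sqrt3}\pi^2$.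
   Context: $\mathbb{R}^6_2$ is $\mathbb{R}^6$ with inner product $\langle x,y\rangle=\sum_{i=1}^4x_iy_i-x_5y_5-x_6y_6$ (extended complex-bilinearly), with a fixed orientation; $C^5$ its light cone; $Q^4_1=\{[x]\in\mathbb{R}P^5:x\in C^5\setminus\{0\}\}$. A conformal spacelike immersion $y$ into $Q^4_1$ satisfies, for any local lift $Y$ and complex coordinate $z=u+iv$, $\langle Y_z,Y_z\rangle=0$, $\langle Y_z,Y_{\bar z}\rangle>0$ ($Y_z=\frac12(Y_u-iY_v)$); the canonical lift has $\langle Y_z,Y_{\bar z}\rangle=\frac12$. $V=\mathrm{Span}\{Y,Y_u,Y_v,Y_{z\bar z}\}$, $V^\perp$ its orthogonal complement; $N\in\Gamma(V)$ with $\langle N,Y_z\rangle=\langle N,N\rangle=0$, $\langle N,Y\rangle=-1$; $L,R\in\Gamma(V^\perp)$ real null with $\langle L,R\rangle=-1$ and $\{Y,Y_u,Y_v,N,R,L\}$ positively oriented. $Y_{zz}=-\frac s2Y+\kappa$ defines the conformal Hopf differential $\kappa$; $D$ is the normal connection on $V^\perp$. The Willmore functional is $W(y)=\frac i2\int_M\langle\kappa,\bar\kappa\rangle dz\wedge d\bar z$; $y$ is Willmore if it is critical for $W$ under all variations, equivalently $D_{\bar z}D_{\bar z}\kappa+\frac{\bar s}2\kappa=0$; S-Willmore if additionally $D_{\bar z}\kappa$ is parallel to $\kappa$. *)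

theory Defs
  imports "HOL-Analysis.Analysis"
begin

text \<open>Coordinates 1..6 of R^6 are the indices 1,2,3,4,5,6 of the numeral type 6
  (where the index 6 coincides with 0 of that type; all six are distinct).\<close>

definition mk6 :: "'a \<Rightarrow> 'a \<Rightarrow> 'a \<Rightarrow> 'a \<Rightarrow> 'a \<Rightarrow> 'a \<Rightarrow> 'a^6" where
  "mk6 a1 a2 a3 a4 a5 a6 =
     (\<chi> i. if i = 1 then a1 else if i = 2 then a2 else if i = 3 then a3
           else if i = 4 then a4 else if i = 5 then a5 else a6)"

definition sig :: "6 \<Rightarrow> real" where
  "sig i = (if i = 5 \<or> i = 6 then -1 else 1)"

definition lor :: "real^6 \<Rightarrow> real^6 \<Rightarrow> real" where
  "lor x y = (\<Sum>i\<in>UNIV. sig i * x$i * y$i)"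

definition clor :: "complex^6 \<Rightarrow> complex^6 \<Rightarrow> complex" where
  "clor x y = (\<Sum>i\<in>UNIV. complex_of_real (sig i) * x$i * y$i)"

definition cvec :: "real^6 \<Rightarrow> complex^6" where
  "cvec x = (\<chi> i. complex_of_real (x$i))"

definition vRe :: "complex^6 \<Rightarrow> real^6" where
  "vRe w = (\<chi> i. Re (w$i))"

definition vIm :: "complex^6 \<Rightarrow> real^6" where
  "vIm w = (\<chi> i. Im (w$i))"

definition vcnj :: "complex^6 \<Rightarrow> complex^6" where
  "vcnj w = (\<chi> i. cnj (w$i))"

definition pd :: "(complex \<Rightarrow> 'a::real_normed_vector) \<Rightarrow> complex \<Rightarrow> complex \<Rightarrow> 'a" where
  "pd F d p = vector_derivative (\<lambda>s::real. F (p + complex_of_real s * d)) (at 0)"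

fun iterpd :: "complex list \<Rightarrow> (complex \<Rightarrow> 'a::real_normed_vector) \<Rightarrow> complex \<Rightarrow> 'a" where
  "iterpd [] F = F"
| "iterpd (d # ds) F = pd (iterpd ds F) d"

definition smooth_map :: "(complex \<Rightarrow> 'a::real_normed_vector) \<Rightarrow> bool" where
  "smooth_map F \<longleftrightarrow> (\<forall>ds p. iterpd ds F differentiable (at p))"

definition dz :: "(complex \<Rightarrow> complex^6) \<Rightarrow> complex \<Rightarrow> complex^6" where
  "dz F p = (1/2) *s (pd F 1 p - \<i> *s pd F \<i> p)"

definition dzb :: "(complex \<Rightarrow> complex^6) \<Rightarrow> complex \<Rightarrow> complex^6" where
  "dzb F p = (1/2) *s (pd F 1 p + \<i> *s pd F \<i> p)"

definition Yz :: "(complex \<Rightarrow> real^6) \<Rightarrow> complex \<Rightarrow> complex^6" where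
  "Yz Y = dz (cvec \<circ> Y)"

definition Yzb :: "(complex \<Rightarrow> real^6) \<Rightarrow> complex \<Rightarrow> complex^6" where
  "Yzb Y = dzb (cvec \<circ> Y)"

definition Yzz :: "(complex \<Rightarrow> real^6) \<Rightarrow> complex \<Rightarrow> complex^6" where
  "Yzz Y = dz (dz (cvec \<circ> Y))"

definition Yzzb :: "(complex \<Rightarrow> real^6) \<Rightarrow> complex \<Rightarrow> real^6" where
  "Yzzb Y p = (1/4) *\<^sub>R (pd (pd Y 1) 1 p + pd (pd Y \<i>) \<i> p)"

text \<open>Y is a lift (into the light cone minus 0) of a conformal spacelike immersion
  y = [Y] into Q^4_1, with respect to the complex coordinate z.\<close>
definition conf_spacelike_lift :: "(complex \<Rightarrow> real^6) \<Rightarrow> bool" where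
  "conf_spacelike_lift Y \<longleftrightarrow> smooth_map Y \<and>
     (\<forall>p. Y p \<noteq> 0 \<and> lor (Y p) (Y p) = 0 \<and>
          clor (Yz Y p) (Yz Y p) = 0 \<and>
          Im (clor (Yz Y p) (Yzb Y p)) = 0 \<and> Re (clor (Yz Y p) (Yzb Y p)) > 0)"

definition canonical_lift :: "(complex \<Rightarrow> real^6) \<Rightarrow> bool" where
  "canonical_lift Y \<longleftrightarrow> (\<forall>p. clor (Yz Y p) (Yzb Y p) = 1/2)"

definition Vsp :: "(complex \<Rightarrow> real^6) \<Rightarrow> complex \<Rightarrow> (real^6) set" where
  "Vsp Y p = span {Y p, pd Y 1 p, pd Y \<i> p, Yzzb Y p}"

definition Vperp :: "(complex \<Rightarrow> real^6) \<Rightarrow> complex \<Rightarrow> (real^6) set" where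
  "Vperp Y p = {x. \<forall>w\<in>Vsp Y p. lor x w = 0}"

definition cVsp :: "(complex \<Rightarrow> real^6) \<Rightarrow> complex \<Rightarrow> (complex^6) set" where
  "cVsp Y p = {w. vRe w \<in> Vsp Y p \<and> vIm w \<in> Vsp Y p}"

definition cVperp :: "(complex \<Rightarrow> real^6) \<Rightarrow> complex \<Rightarrow> (complex^6) set" where
  "cVperp Y p = {w. vRe w \<in> Vperp Y p \<and> vIm w \<in> Vperp Y p}"

definition Nvec :: "(complex \<Rightarrow> real^6) \<Rightarrow> complex \<Rightarrow> real^6" where
  "Nvec Y p = (THE n. n \<in> Vsp Y p \<and> lor n (pd Y 1 p) = 0 \<and> lor n (pd Y \<i> p) = 0 \<and>
                      lor n n = 0 \<and> lor n (Y p) = -1)"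

definition hopf :: "(complex \<Rightarrow> real^6) \<Rightarrow> complex \<Rightarrow> complex^6" where
  "hopf Y p = (THE k. k \<in> cVperp Y p \<and> (\<exists>s. Yzz Y p = (- s/2) *s cvec (Y p) + k))"

definition sfun :: "(complex \<Rightarrow> real^6) \<Rightarrow> complex \<Rightarrow> complex" where
  "sfun Y p = (THE s. \<exists>k \<in> cVperp Y p. Yzz Y p = (- s/2) *s cvec (Y p) + k)"

definition projperp :: "(complex \<Rightarrow> real^6) \<Rightarrow> complex \<Rightarrow> complex^6 \<Rightarrow> complex^6" where
  "projperp Y p w = (THE k. k \<in> cVperp Y p \<and> w - k \<in> cVsp Y p)"

definition Dzb :: "(complex \<Rightarrow> real^6) \<Rightarrow> (complex \<Rightarrow> complex^6) \<Rightarrow> complex \<Rightarrow> complex^6" where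
  "Dzb Y xi p = projperp Y p (dzb xi p)"

text \<open>Willmore equation (for the canonical lift):
  D_zbar D_zbar kappa + (conj s / 2) kappa = 0.\<close>
definition willmore_lift :: "(complex \<Rightarrow> real^6) \<Rightarrow> bool" where
  "willmore_lift Y \<longleftrightarrow>
     (\<forall>p. Dzb Y (Dzb Y (hopf Y)) p + (cnj (sfun Y p) / 2) *s hopf Y p = 0)"

definition s_willmore_lift :: "(complex \<Rightarrow> real^6) \<Rightarrow> bool" where
  "s_willmore_lift Y \<longleftrightarrow> willmore_lift Y \<and>
     (\<forall>p. \<exists>a b. (a, b) \<noteq> (0, 0) \<and> a *s Dzb Y (hopf Y) p + b *s hopf Y p = 0)"

definition null_normal_frame ::
    "(complex \<Rightarrow> real^6) \<Rightarrow> (complex \<Rightarrow> real^6) \<Rightarrow> (complex \<Rightarrow> real^6) \<Rightarrow> bool" where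
  "null_normal_frame Y L R \<longleftrightarrow> smooth_map L \<and> smooth_map R \<and>
     (\<forall>p. L p \<in> Vperp Y p \<and> R p \<in> Vperp Y p \<and>
          lor (L p) (L p) = 0 \<and> lor (R p) (R p) = 0 \<and> lor (L p) (R p) = -1 \<and>
          det (mk6 (Y p) (pd Y 1 p) (pd Y \<i> p) (Nvec Y p) (R p) (L p)) > 0)"

text \<open>Willmore functional W = (i/2) int <kappa, conj kappa> dz /\ dzbar over the
  fundamental domain [0,A] x [0,B] of the rectangular lattice generated by (A,0),(0,B);
  dz /\ dzbar = -2i du dv.\<close>
definition willmore_rect :: "(complex \<Rightarrow> real^6) \<Rightarrow> real \<Rightarrow> real \<Rightarrow> complex" where
  "willmore_rect Y A B =
     (\<i> / 2) * integral (cbox 0 (Complex A B))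
                 (\<lambda>w. clor (hopf Y w) (vcnj (hopf Y w)) * (- 2 * \<i>))"

definition descends :: "(complex \<Rightarrow> real^6) \<Rightarrow> real \<Rightarrow> real \<Rightarrow> bool" where
  "descends Y A B \<longleftrightarrow>
     (\<forall>w. (\<exists>c. c \<noteq> 0 \<and> Y (w + Complex A 0) = c *\<^sub>R Y w) \<and>
          (\<exists>c. c \<noteq> 0 \<and> Y (w + Complex 0 B) = c *\<^sub>R Y w))"

definition Yt :: "real \<Rightarrow> complex \<Rightarrow> real^6" where
  "Yt t w = (let \<theta> = Re w; \<phi> = Im w;
                 a = t * \<theta> / sqrt (t\<^sup>2 - 1); b = \<theta> / sqrt (t\<^sup>2 - 1)
             in mk6 (cos a * cos \<phi>) (cos a * sin \<phi>) (sin a * cos \<phi>) (sin a * sin \<phi>)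
                    (cos b) (sin b))"

end

theory Submission
  imports Defs
begin

(*
  The surface Y_t is an orbit of a two-parameter abelian group of isometries of R^6_2:
  Y_t(w) = F(w) Y0, where F(w) rotates the planes (e1,e3), (e2,e4) by a = ka*theta,
  the planes (e1,e2), (e3,e4) by phi, and the timelike plane (e5,e6) by b = kb*theta.
  Consequently every object of the theorem has the form F(w) c for a constant vector c:
  the derivatives of w |-> F(w) c are F(w) applied to the constant generators, and
  F(w) preserves the inner product.  All the geometry is therefore reduced to linear
  algebra with explicit constant vectors at the origin.
*)

lemma exhaust_6:
  fixes x :: 6
  shows "x = 1 \<or> x = 2 \<or> x = 3 \<or> x = 4 \<or> x = 5 \<or> x = 6"
proof (induct x)
  case (of_int z)
  then have "z = 0 \<or> z = 1 \<or> z = 2 \<or> z = 3 \<or> z = 4 \<or> z = 5" by fastforce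
  then show ?case by auto
qed

lemma UNIV_6: "UNIV = {1, 2, 3, 4, 5, 6::6}"
  using exhaust_6 by auto

lemma sum_6: "sum f (UNIV::6 set) = f 1 + f 2 + f 3 + f 4 + f 5 + f 6"
  unfolding UNIV_6 by (simp add: ac_simps)

lemma vec_eq6:
  "(x::'a^6) = y \<longleftrightarrow> x$1 = y$1 \<and> x$2 = y$2 \<and> x$3 = y$3 \<and> x$4 = y$4 \<and> x$5 = y$5 \<and> x$6 = y$6"
proof -
  have "(\<forall>i. P i) \<longleftrightarrow> P 1 \<and> P 2 \<and> P 3 \<and> P 4 \<and> P 5 \<and> P (6::6)" for P
    using exhaust_6 by metis
  then show ?thesis unfolding vec_eq_iff .
qed

lemma mk6_nth [simp]:
  "mk6 a1 a2 a3 a4 a5 a6 $ 1 = a1" "mk6 a1 a2 a3 a4 a5 a6 $ 2 = a2"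
  "mk6 a1 a2 a3 a4 a5 a6 $ 3 = a3" "mk6 a1 a2 a3 a4 a5 a6 $ 4 = a4"
  "mk6 a1 a2 a3 a4 a5 a6 $ 5 = a5" "mk6 a1 a2 a3 a4 a5 a6 $ 6 = a6"
  by (simp_all add: mk6_def)

lemma mk6_eq_iff [simp]: "mk6 a1 a2 a3 a4 a5 a6 = mk6 b1 b2 b3 b4 b5 b6 \<longleftrightarrow>
   a1 = b1 \<and> a2 = b2 \<and> a3 = b3 \<and> a4 = b4 \<and> a5 = b5 \<and> a6 = b6"
  by (simp add: vec_eq6)

lemma mk6_add [simp]: "mk6 a1 a2 a3 a4 a5 a6 + mk6 b1 b2 b3 b4 b5 b6 =
    mk6 (a1+b1) (a2+b2) (a3+b3) (a4+b4) (a5+b5) (a6+b6)"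
  by (simp add: vec_eq6)

lemma mk6_diff [simp]: "mk6 a1 a2 a3 a4 a5 a6 - mk6 b1 b2 b3 b4 b5 b6 =
    mk6 (a1-b1) (a2-b2) (a3-b3) (a4-b4) (a5-b5) (a6-b6)"
  by (simp add: vec_eq6)

lemma mk6_uminus [simp]: "- mk6 a1 a2 a3 a4 a5 a6 = mk6 (-a1) (-a2) (-a3) (-a4) (-a5) (-a6)"
  by (simp add: vec_eq6)

lemma mk6_scaleR [simp]: "r *\<^sub>R mk6 a1 a2 a3 a4 a5 a6 = mk6 (r*a1) (r*a2) (r*a3) (r*a4) (r*a5) (r*a6)"
  by (simp add: vec_eq6)

lemma mk6_zero: "0 = mk6 0 0 0 0 0 0"
  by (simp add: vec_eq6)

lemma has_derivative_mk6:
  assumes "(g1 has_derivative g1') F" "(g2 has_derivative g2') F" "(g3 has_derivative g3') F"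
    "(g4 has_derivative g4') F" "(g5 has_derivative g5') F" "(g6 has_derivative g6') F"
  shows "((\<lambda>x. mk6 (g1 x) (g2 x) (g3 x) (g4 x) (g5 x) (g6 x) :: real^6) has_derivative
          (\<lambda>h. mk6 (g1' h) (g2' h) (g3' h) (g4' h) (g5' h) (g6' h))) F"
proof -
  have axes: "mk6 a1 a2 a3 a4 a5 a6 = a1 *\<^sub>R axis 1 1 + a2 *\<^sub>R axis 2 1 + a3 *\<^sub>R axis 3 1 +
      a4 *\<^sub>R axis 4 1 + a5 *\<^sub>R axis 5 1 + (a6::real) *\<^sub>R axis 6 1" for a1 a2 a3 a4 a5 a6
    by (simp add: vec_eq6 axis_def)
  show ?thesis
    unfolding axes by (intro has_derivative_add has_derivative_scaleR_left assms)
qed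

lemma sig_vals [simp]: "sig 1 = 1" "sig 2 = 1" "sig 3 = 1" "sig 4 = 1" "sig 5 = -1" "sig 6 = -1"
  by (simp_all add: sig_def)

lemma lor_expand: "lor x y = x$1*y$1 + x$2*y$2 + x$3*y$3 + x$4*y$4 - x$5*y$5 - x$6*y$6"
  by (simp add: lor_def sum_6)

lemma lor_mk6 [simp]: "lor (mk6 a1 a2 a3 a4 a5 a6) (mk6 b1 b2 b3 b4 b5 b6) =
    a1*b1 + a2*b2 + a3*b3 + a4*b4 - a5*b5 - a6*b6"
  by (simp add: lor_expand)

lemma lor_add_left: "lor (x + y) z = lor x z + lor y z"
  and lor_add_right: "lor z (x + y) = lor z x + lor z y"
  and lor_diff_left: "lor (x - y) z = lor x z - lor y z"
  and lor_diff_right: "lor z (x - y) = lor z x - lor z y"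
  and lor_minus_left: "lor (- x) z = - lor x z"
  and lor_minus_right: "lor z (- x) = - lor z x"
  and lor_scaleR_left: "lor (r *\<^sub>R x) z = r * lor x z"
  and lor_scaleR_right: "lor z (r *\<^sub>R x) = r * lor z x"
  by (simp_all add: lor_expand algebra_simps)

lemma lor_zero [simp]: "lor 0 x = 0" "lor x 0 = 0"
  by (simp_all add: lor_def)

lemmas lor_bilinear = lor_add_left lor_add_right lor_diff_left lor_diff_right
  lor_minus_left lor_minus_right lor_scaleR_left lor_scaleR_right

lemma vRe_diff: "vRe (a - b) = vRe a - vRe b"
  and vIm_diff: "vIm (a - b) = vIm a - vIm b"
  by (simp_all add: vRe_def vIm_def vec_eq_iff)

lemma vRe_vIm_smult_cvec: "vRe (c *s cvec y) = Re c *\<^sub>R y" "vIm (c *s cvec y) = Im c *\<^sub>R y"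
  by (simp_all add: vRe_def vIm_def cvec_def vec_eq_iff)

lemma vRe_vIm_eq_0: "vRe a = 0 \<Longrightarrow> vIm a = 0 \<Longrightarrow> a = 0"
  by (simp add: vRe_def vIm_def vec_eq_iff complex_eq_iff)

lemma pd_has_derivative:
  assumes "(F has_derivative F') (at p)"
  shows "pd F d p = F' d"
proof -
  have lin: "linear F'" using has_derivative_linear[OF assms] .
  have "((\<lambda>s::real. p + complex_of_real s * d) has_derivative (\<lambda>s. complex_of_real s * d)) (at 0)"
    by (rule derivative_eq_intros refl)+ simp
  moreover have "(F has_derivative F') (at ((\<lambda>s::real. p + complex_of_real s * d) 0))"
    using assms by simp
  ultimately have "((\<lambda>s::real. F (p + complex_of_real s * d)) has_derivative
      (\<lambda>s. F' (complex_of_real s * d))) (at 0)"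
    by (rule has_derivative_compose[where f="\<lambda>s::real. p + complex_of_real s * d", simplified])
  moreover have "F' (complex_of_real s * d) = s *\<^sub>R F' d" for s
    using linear.scaleR[OF lin, of s d] by (simp add: scaleR_conv_of_real)
  ultimately have "((\<lambda>s::real. F (p + complex_of_real s * d)) has_vector_derivative F' d) (at 0)"
    by (simp add: has_vector_derivative_def)
  then show ?thesis unfolding pd_def by (rule vector_derivative_at)
qed

section \<open>The moving isometry\<close>

definition rot :: "real \<Rightarrow> real \<Rightarrow> real^6 \<Rightarrow> complex \<Rightarrow> real^6" where
  "rot m n \<alpha> w = (let a = m * Re w; b = n * Re w; \<phi> = Im w in
    mk6 (\<alpha>$1 * (cos a * cos \<phi>) - \<alpha>$2 * (cos a * sin \<phi>) - \<alpha>$3 * (sin a * cos \<phi>) + \<alpha>$4 * (sin a * sin \<phi>))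
        (\<alpha>$1 * (cos a * sin \<phi>) + \<alpha>$2 * (cos a * cos \<phi>) - \<alpha>$3 * (sin a * sin \<phi>) - \<alpha>$4 * (sin a * cos \<phi>))
        (\<alpha>$1 * (sin a * cos \<phi>) - \<alpha>$2 * (sin a * sin \<phi>) + \<alpha>$3 * (cos a * cos \<phi>) - \<alpha>$4 * (cos a * sin \<phi>))
        (\<alpha>$1 * (sin a * sin \<phi>) + \<alpha>$2 * (sin a * cos \<phi>) + \<alpha>$3 * (cos a * sin \<phi>) + \<alpha>$4 * (cos a * cos \<phi>))
        (\<alpha>$5 * cos b - \<alpha>$6 * sin b)
        (\<alpha>$5 * sin b + \<alpha>$6 * cos b))"

definition gen_u :: "real \<Rightarrow> real \<Rightarrow> real^6 \<Rightarrow> real^6" where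
  "gen_u m n \<alpha> = mk6 (- m * \<alpha>$3) (- m * \<alpha>$4) (m * \<alpha>$1) (m * \<alpha>$2) (- n * \<alpha>$6) (n * \<alpha>$5)"

definition gen_v :: "real^6 \<Rightarrow> real^6" where
  "gen_v \<alpha> = mk6 (- \<alpha>$2) (\<alpha>$1) (- \<alpha>$4) (\<alpha>$3) 0 0"

lemma gen_u_mk6 [simp]: "gen_u m n (mk6 a1 a2 a3 a4 a5 a6) =
    mk6 (- m * a3) (- m * a4) (m * a1) (m * a2) (- n * a6) (n * a5)"
  by (simp add: gen_u_def)

lemma gen_v_mk6 [simp]: "gen_v (mk6 a1 a2 a3 a4 a5 a6) = mk6 (- a2) a1 (- a4) a3 0 0"
  by (simp add: gen_v_def)

lemma gen_zero [simp]: "gen_u m n 0 = 0" "gen_v 0 = 0"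
  by (simp_all add: gen_u_def gen_v_def mk6_zero)

lemma rot_add: "rot m n (\<alpha> + \<beta>) w = rot m n \<alpha> w + rot m n \<beta> w"
  and rot_diff: "rot m n (\<alpha> - \<beta>) w = rot m n \<alpha> w - rot m n \<beta> w"
  and rot_uminus: "rot m n (- \<alpha>) w = - rot m n \<alpha> w"
  and rot_scaleR: "rot m n (r *\<^sub>R \<alpha>) w = r *\<^sub>R rot m n \<alpha> w"
  by (simp_all add: rot_def Let_def algebra_simps)

lemma rot_zero [simp]: "rot m n 0 w = 0"
  by (simp add: rot_def Let_def mk6_zero)

lemma rot_at_0 [simp]: "rot m n \<alpha> 0 = \<alpha>"
  by (simp add: rot_def vec_eq6)

lemma rot_has_derivative:
  "(rot m n \<alpha> has_derivative
     (\<lambda>h. rot m n (Re h *\<^sub>R gen_u m n \<alpha> + Im h *\<^sub>R gen_v \<alpha>) w)) (at w)"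
  unfolding rot_def[abs_def] Let_def
  apply (rule has_derivative_eq_rhs)
   apply (rule has_derivative_mk6; (rule derivative_eq_intros refl)+)
  apply (rule ext)
  apply (simp only: gen_u_def gen_v_def mk6_scaleR mk6_add mk6_nth mk6_eq_iff)
  apply (intro conjI; simp add: algebra_simps)
  done

lemma pd_rot: "pd (rot m n \<alpha>) d = rot m n (Re d *\<^sub>R gen_u m n \<alpha> + Im d *\<^sub>R gen_v \<alpha>)"
  by (simp add: fun_eq_iff pd_has_derivative[OF rot_has_derivative])

lemma pd_rot_1: "pd (rot m n \<alpha>) 1 = rot m n (gen_u m n \<alpha>)"
  and pd_rot_i: "pd (rot m n \<alpha>) \<i> = rot m n (gen_v \<alpha>)"
  by (simp_all add: pd_rot)

text \<open>All iterated derivatives of w |-> rot w alpha are again of this form, hence smooth.\<close>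

lemma smooth_rot: "smooth_map (rot m n \<alpha>)"
proof -
  have iter: "\<exists>\<beta>. iterpd ds (rot m n \<alpha>) = rot m n \<beta>" for ds
  proof (induction ds)
    case (Cons d ds)
    then obtain \<beta> where "iterpd ds (rot m n \<alpha>) = rot m n \<beta>" by blast
    then have "iterpd (d # ds) (rot m n \<alpha>) =
        rot m n (Re d *\<^sub>R gen_u m n \<beta> + Im d *\<^sub>R gen_v \<beta>)"
      by (simp add: pd_rot)
    then show ?case by blast
  qed (rule exI[of _ \<alpha>], simp)
  show ?thesis
    unfolding smooth_map_def
  proof (intro allI)
    fix ds p
    obtain \<beta> where "iterpd ds (rot m n \<alpha>) = rot m n \<beta>" using iter by blast
    then show "iterpd ds (rot m n \<alpha>) differentiable at p"
      using rot_has_derivative[of m n \<beta> p] by (auto simp: differentiable_def)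
  qed
qed

lemma lor_rot: "lor (rot m n \<alpha> w) (rot m n \<beta> w) = lor \<alpha> \<beta>"
proof -
  have rot4: "(a1 * (A * C) - a2 * (A * D) - a3 * (S * C) + a4 * (S * D)) *
         (b1 * (A * C) - b2 * (A * D) - b3 * (S * C) + b4 * (S * D)) +
         (a1 * (A * D) + a2 * (A * C) - a3 * (S * D) - a4 * (S * C)) *
         (b1 * (A * D) + b2 * (A * C) - b3 * (S * D) - b4 * (S * C)) +
         (a1 * (S * C) - a2 * (S * D) + a3 * (A * C) - a4 * (A * D)) *
         (b1 * (S * C) - b2 * (S * D) + b3 * (A * C) - b4 * (A * D)) +
         (a1 * (S * D) + a2 * (S * C) + a3 * (A * D) + a4 * (A * C)) *
         (b1 * (S * D) + b2 * (S * C) + b3 * (A * D) + b4 * (A * C)) -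
         (a5 * E - a6 * G) * (b5 * E - b6 * G) - (a5 * G + a6 * E) * (b5 * G + b6 * E) =
         (a1*b1 + a2*b2 + a3*b3 + a4*b4) * ((A^2 + S^2) * (C^2 + D^2)) - (a5*b5 + a6*b6) * (E^2 + G^2)"
    for a1 a2 a3 a4 a5 a6 b1 b2 b3 b4 b5 b6 A S C D E G :: real
    by algebra
  show ?thesis
    unfolding rot_def Let_def lor_expand mk6_nth rot4 by simp
qed

definition crot :: "real \<Rightarrow> real \<Rightarrow> real^6 \<Rightarrow> real^6 \<Rightarrow> complex \<Rightarrow> complex^6" where
  "crot m n \<alpha> \<beta> w = cvec (rot m n \<alpha> w) + \<i> *s cvec (rot m n \<beta> w)"

lemma crot_nth: "crot m n \<alpha> \<beta> w $ j = Complex (rot m n \<alpha> w $ j) (rot m n \<beta> w $ j)"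
  by (simp add: crot_def cvec_def complex_eq_iff)

lemma crot_eqI: "\<alpha> = \<gamma> \<Longrightarrow> \<beta> = \<delta> \<Longrightarrow> crot m n \<alpha> \<beta> w = crot m n \<gamma> \<delta> w"
  by simp

lemma crot_add: "crot m n \<alpha> \<beta> w + crot m n \<gamma> \<delta> w = crot m n (\<alpha> + \<gamma>) (\<beta> + \<delta>) w"
  and crot_diff: "crot m n \<alpha> \<beta> w - crot m n \<gamma> \<delta> w = crot m n (\<alpha> - \<gamma>) (\<beta> - \<delta>) w"
  and crot_smult: "z *s crot m n \<alpha> \<beta> w =
      crot m n (Re z *\<^sub>R \<alpha> - Im z *\<^sub>R \<beta>) (Im z *\<^sub>R \<alpha> + Re z *\<^sub>R \<beta>) w"
  and cvec_rot: "cvec (rot m n \<alpha> w) = crot m n \<alpha> 0 w"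
  and vcnj_crot: "vcnj (crot m n \<alpha> \<beta> w) = crot m n \<alpha> (- \<beta>) w"
  and crot_zero: "crot m n 0 0 w = 0"
  by (simp_all add: vec_eq_iff crot_nth cvec_def vcnj_def rot_add rot_diff rot_scaleR rot_uminus
      complex_eq_iff)

lemma vRe_crot [simp]: "vRe (crot m n \<alpha> \<beta> w) = rot m n \<alpha> w"
  and vIm_crot [simp]: "vIm (crot m n \<alpha> \<beta> w) = rot m n \<beta> w"
  by (simp_all add: vec_eq_iff crot_nth vRe_def vIm_def)

lemma clor_crot: "clor (crot m n \<alpha> \<beta> w) (crot m n \<gamma> \<delta> w) =
   Complex (lor \<alpha> \<gamma> - lor \<beta> \<delta>) (lor \<alpha> \<delta> + lor \<beta> \<gamma>)"
proof -
  have "clor (crot m n \<alpha> \<beta> w) (crot m n \<gamma> \<delta> w) =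
     Complex (lor (rot m n \<alpha> w) (rot m n \<gamma> w) - lor (rot m n \<beta> w) (rot m n \<delta> w))
             (lor (rot m n \<alpha> w) (rot m n \<delta> w) + lor (rot m n \<beta> w) (rot m n \<gamma> w))"
    by (simp add: clor_def lor_def crot_nth complex_eq_iff sum_6 algebra_simps)
  then show ?thesis by (simp add: lor_rot)
qed

lemma crot_has_derivative:
  "(crot m n \<alpha> \<beta> has_derivative
     (\<lambda>h. crot m n (Re h *\<^sub>R gen_u m n \<alpha> + Im h *\<^sub>R gen_v \<alpha>)
                   (Re h *\<^sub>R gen_u m n \<beta> + Im h *\<^sub>R gen_v \<beta>) w)) (at w)"
proof -
  have lin_cvec: "bounded_linear cvec"
    unfolding linear_conv_bounded_linear[symmetric]
    by (rule linearI) (simp_all add: cvec_def vec_eq_iff, simp add: scaleR_conv_of_real)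
  have lin_i: "bounded_linear (\<lambda>x::complex^6. \<i> *s x)"
    unfolding linear_conv_bounded_linear[symmetric]
    by (rule linearI) (simp_all add: vec_eq_iff algebra_simps scaleR_conv_of_real)
  show ?thesis
    unfolding crot_def[abs_def]
    by (intro has_derivative_add bounded_linear.has_derivative[OF lin_cvec rot_has_derivative]
        bounded_linear.has_derivative[OF lin_i] bounded_linear.has_derivative[OF lin_cvec])
      (rule rot_has_derivative)
qed

lemma dz_crot: "dz (crot m n \<alpha> \<beta>) =
    crot m n ((1/2) *\<^sub>R (gen_u m n \<alpha> + gen_v \<beta>)) ((1/2) *\<^sub>R (gen_u m n \<beta> - gen_v \<alpha>))"
  and dzb_crot: "dzb (crot m n \<alpha> \<beta>) =
    crot m n ((1/2) *\<^sub>R (gen_u m n \<alpha> - gen_v \<beta>)) ((1/2) *\<^sub>R (gen_u m n \<beta> + gen_v \<alpha>))"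
  by (simp_all add: fun_eq_iff dz_def dzb_def pd_has_derivative[OF crot_has_derivative]
      vec_eq_iff crot_nth rot_add rot_diff rot_scaleR complex_eq_iff)

text \<open>These hold for any lift Y: projperp, hopf and sfun are defined by definite
  descriptions, which are determined as soon as the relevant decompositions are unique.\<close>

lemma zero_Vperp [simp]: "0 \<in> Vperp Y p"
  by (simp add: Vperp_def)

lemma Vperp_diff: "x \<in> Vperp Y p \<Longrightarrow> y \<in> Vperp Y p \<Longrightarrow> x - y \<in> Vperp Y p"
  by (simp add: Vperp_def lor_diff_left)

lemma cVperp_diff: "a \<in> cVperp Y p \<Longrightarrow> b \<in> cVperp Y p \<Longrightarrow> a - b \<in> cVperp Y p"
  by (simp add: cVperp_def vRe_diff vIm_diff Vperp_diff)

lemma cVsp_diff: "a \<in> cVsp Y p \<Longrightarrow> b \<in> cVsp Y p \<Longrightarrow> a - b \<in> cVsp Y p"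
  by (simp add: cVsp_def vRe_diff vIm_diff Vsp_def span_diff)

lemma projperp_unique:
  assumes nondeg: "Vsp Y p \<inter> Vperp Y p \<subseteq> {0}"
    and k: "k \<in> cVperp Y p" "w - k \<in> cVsp Y p"
  shows "projperp Y p w = k"
  unfolding projperp_def
proof (rule the_equality)
  show "k \<in> cVperp Y p \<and> w - k \<in> cVsp Y p" using k by simp
next
  fix k' assume k': "k' \<in> cVperp Y p \<and> w - k' \<in> cVsp Y p"
  have "k' - k \<in> cVperp Y p" using k k' by (simp add: cVperp_diff)
  moreover have "k' - k \<in> cVsp Y p"
    using cVsp_diff[of "w - k" Y p "w - k'"] k k' by simp
  ultimately have "vRe (k' - k) = 0" "vIm (k' - k) = 0"
    using nondeg by (auto simp: cVperp_def cVsp_def)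
  then show "k' = k" using vRe_vIm_eq_0[of "k' - k"] by simp
qed

lemma Yzz_decomposition_unique:
  assumes x: "x \<in> Vsp Y p" "lor (Y p) x \<noteq> 0"
    and k: "k \<in> cVperp Y p" "Yzz Y p = (- s/2) *s cvec (Y p) + k"
  shows "hopf Y p = k" "sfun Y p = s"
proof -
  have uniq: "k' = k \<and> s' = s"
    if k': "k' \<in> cVperp Y p" "Yzz Y p = (- s'/2) *s cvec (Y p) + k'" for k' s'
  proof -
    define c where "c = (s' - s) / 2"
    have "(k' - k) $ i = (c *s cvec (Y p)) $ i" for i
    proof -
      have "(- s/2) * cvec (Y p) $ i + k $ i = (- s'/2) * cvec (Y p) $ i + k' $ i"
        using k(2) k'(2) by (metis vector_add_component vector_smult_component)
      then have "k' $ i = (- s/2) * cvec (Y p) $ i + k $ i - (- s'/2) * cvec (Y p) $ i"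
        by (simp add: eq_diff_eq)
      then show ?thesis by (simp add: c_def field_simps)
    qed
    then have "k' - k = c *s cvec (Y p)" by (simp add: vec_eq_iff)
    then have "c *s cvec (Y p) \<in> cVperp Y p" using cVperp_diff[OF k'(1) k(1)] by simp
    then have "Re c *\<^sub>R Y p \<in> Vperp Y p" "Im c *\<^sub>R Y p \<in> Vperp Y p"
      by (simp_all add: cVperp_def vRe_vIm_smult_cvec)
    then have "Re c * lor (Y p) x = 0" "Im c * lor (Y p) x = 0"
      using x(1) by (auto simp: Vperp_def lor_scaleR_left)
    then have "c = 0" using x(2) by (simp add: complex_eq_iff)
    then show ?thesis using \<open>k' - k = c *s cvec (Y p)\<close> by (simp add: c_def)
  qed
  show "hopf Y p = k"
    unfolding hopf_def using k uniq by (intro the_equality) blast+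
  show "sfun Y p = s"
    unfolding sfun_def using k uniq by (intro the_equality) blast+
qed

text \<open>The angular speeds: a = ka t * theta and b = kb t * theta.\<close>

definition ka :: "real \<Rightarrow> real" where "ka t = t / sqrt (t\<^sup>2 - 1)"
definition kb :: "real \<Rightarrow> real" where "kb t = 1 / sqrt (t\<^sup>2 - 1)"

abbreviation frm :: "real \<Rightarrow> real^6 \<Rightarrow> complex \<Rightarrow> real^6" where
  "frm t \<equiv> rot (ka t) (kb t)"

abbreviation cfrm :: "real \<Rightarrow> real^6 \<Rightarrow> real^6 \<Rightarrow> complex \<Rightarrow> complex^6" where
  "cfrm t \<equiv> crot (ka t) (kb t)"

text \<open>Values at the origin of Y, Y_u, Y_v, Y_{z zbar}, N, of the Hopf differential
  kappa = i F(w) kappa0, and of a basis E0, F0 of the normal space; the null normals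
  L = (E0 - F0)/sqrt 2 and R = (-E0 - F0)/sqrt 2.\<close>

definition Y0 :: "real^6" where "Y0 = mk6 1 0 0 0 1 0"
definition Yu0 :: "real \<Rightarrow> real^6" where "Yu0 t = mk6 0 0 (ka t) 0 0 (kb t)"
definition Yv0 :: "real^6" where "Yv0 = mk6 0 1 0 0 0 0"
definition Yzzb0 :: "real \<Rightarrow> real^6" where
  "Yzzb0 t = mk6 (- (ka t * ka t + 1) / 4) 0 0 0 (- (kb t * kb t) / 4) 0"
definition N0 :: "real^6" where "N0 = mk6 (-1/2) 0 0 0 (1/2) 0"
definition kappa0 :: "real \<Rightarrow> real^6" where "kappa0 t = mk6 0 0 0 (- ka t / 2) 0 0"
definition E0 :: "real^6" where "E0 = mk6 0 0 0 1 0 0"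
definition F0 :: "real \<Rightarrow> real^6" where "F0 t = mk6 0 0 (kb t) 0 0 (ka t)"
definition L0 :: "real \<Rightarrow> real^6" where
  "L0 t = mk6 0 0 (- kb t / sqrt 2) (1 / sqrt 2) 0 (- ka t / sqrt 2)"
definition R0 :: "real \<Rightarrow> real^6" where
  "R0 t = mk6 0 0 (- kb t / sqrt 2) (- 1 / sqrt 2) 0 (- ka t / sqrt 2)"

lemma Yt_frm: "Yt t = frm t Y0"
  by (simp add: fun_eq_iff Yt_def rot_def Let_def Y0_def ka_def kb_def)

lemma pd_Yt_1: "pd (Yt t) 1 = frm t (Yu0 t)"
  and pd_Yt_i: "pd (Yt t) \<i> = frm t Yv0"
  by (simp_all add: Yt_frm pd_rot_1 pd_rot_i Y0_def Yu0_def Yv0_def)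

lemma cvec_Yt: "cvec \<circ> Yt t = cfrm t Y0 0"
  by (simp add: fun_eq_iff Yt_frm cvec_rot)

lemma Yz_Yt: "Yz (Yt t) = cfrm t ((1/2) *\<^sub>R Yu0 t) (- (1/2) *\<^sub>R Yv0)"
  and Yzb_Yt: "Yzb (Yt t) = cfrm t ((1/2) *\<^sub>R Yu0 t) ((1/2) *\<^sub>R Yv0)"
  by (simp_all add: Yz_def Yzb_def cvec_Yt dz_crot dzb_crot Y0_def Yu0_def Yv0_def)

lemma Yzzb_Yt: "Yzzb (Yt t) p = frm t (Yzzb0 t) p"
proof -
  have "Yzzb (Yt t) p = frm t ((1/4) *\<^sub>R (gen_u (ka t) (kb t) (Yu0 t) + gen_v Yv0)) p"
    by (simp add: Yzzb_def pd_Yt_1 pd_Yt_i pd_rot_1 pd_rot_i rot_add rot_scaleR)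
  also have "(1/4) *\<^sub>R (gen_u (ka t) (kb t) (Yu0 t) + gen_v Yv0) = Yzzb0 t"
    by (simp add: Yu0_def Yv0_def Yzzb0_def)
  finally show ?thesis .
qed

context
  fixes t :: real
  assumes t1: "t > 1"
begin

lemma sqrt_t_pos: "sqrt (t\<^sup>2 - 1) > 0"
  using t1 by (simp add: power_strict_mono[of 1 t 2, simplified])

lemma kb_pos: "kb t > 0"
  using sqrt_t_pos by (simp add: kb_def)

lemma ka_pos: "ka t > 0"
  using sqrt_t_pos t1 by (simp add: ka_def)

text \<open>The one relation between the speeds that the geometry uses.\<close>

lemma ka_sq: "ka t * ka t = 1 + kb t * kb t"
proof -
  have t2: "t\<^sup>2 - 1 > 0" using sqrt_t_pos by simp
  have ss: "sqrt (t\<^sup>2 - 1) * sqrt (t\<^sup>2 - 1) = t\<^sup>2 - 1"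
    using t2 by simp
  show ?thesis
    unfolding ka_def kb_def using ss t2 by (simp add: field_simps power2_eq_square)
qed

lemma Yzz_Yt: "Yzz (Yt t) = cfrm t (- (kb t * kb t / 4) *\<^sub>R Y0) (kappa0 t)"
  unfolding Yzz_def cvec_Yt dz_crot
  using ka_sq by (simp add: Y0_def kappa0_def field_simps)

lemma lor_V0:
  "lor Y0 Y0 = 0" "lor Y0 (Yu0 t) = 0" "lor Y0 Yv0 = 0" "lor Y0 (Yzzb0 t) = -1/2"
  "lor (Yu0 t) Y0 = 0" "lor (Yu0 t) (Yu0 t) = 1" "lor (Yu0 t) Yv0 = 0" "lor (Yu0 t) (Yzzb0 t) = 0"
  "lor Yv0 Y0 = 0" "lor Yv0 (Yu0 t) = 0" "lor Yv0 Yv0 = 1" "lor Yv0 (Yzzb0 t) = 0"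
  "lor (Yzzb0 t) Y0 = -1/2" "lor (Yzzb0 t) (Yu0 t) = 0" "lor (Yzzb0 t) Yv0 = 0"
  "lor (Yzzb0 t) (Yzzb0 t) = ka t * ka t / 4"
  using ka_sq by (simp_all add: Y0_def Yu0_def Yv0_def Yzzb0_def field_simps)

lemma lor_normal0:
  "lor (kappa0 t) Y0 = 0" "lor (kappa0 t) (Yu0 t) = 0" "lor (kappa0 t) Yv0 = 0"
  "lor (kappa0 t) (Yzzb0 t) = 0"
  "lor E0 Y0 = 0" "lor E0 (Yu0 t) = 0" "lor E0 Yv0 = 0" "lor E0 (Yzzb0 t) = 0"
  "lor (F0 t) Y0 = 0" "lor (F0 t) (Yu0 t) = 0" "lor (F0 t) Yv0 = 0" "lor (F0 t) (Yzzb0 t) = 0"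
  "lor (L0 t) Y0 = 0" "lor (L0 t) (Yu0 t) = 0" "lor (L0 t) Yv0 = 0" "lor (L0 t) (Yzzb0 t) = 0"
  "lor (R0 t) Y0 = 0" "lor (R0 t) (Yu0 t) = 0" "lor (R0 t) Yv0 = 0" "lor (R0 t) (Yzzb0 t) = 0"
  by (simp_all add: kappa0_def E0_def F0_def L0_def R0_def Y0_def Yu0_def Yv0_def Yzzb0_def
      algebra_simps)

lemma N0_comb: "N0 = (ka t * ka t / 2) *\<^sub>R Y0 + 0 *\<^sub>R Yu0 t + 0 *\<^sub>R Yv0 + 2 *\<^sub>R Yzzb0 t"
  using ka_sq by (simp add: N0_def Y0_def Yzzb0_def field_simps mk6_zero[symmetric])

lemma lor_null_pair: "lor (L0 t) (L0 t) = 0" "lor (R0 t) (R0 t) = 0" "lor (L0 t) (R0 t) = -1"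
  using ka_sq by (simp_all add: L0_def R0_def field_simps)

lemmas lor_simps = lor_bilinear lor_V0 lor_normal0 lor_null_pair

end

lemma span_4: "x \<in> span {u1, u2, u3, u4} \<longleftrightarrow>
    (\<exists>k1 k2 k3 k4. x = k1 *\<^sub>R u1 + k2 *\<^sub>R u2 + k3 *\<^sub>R u3 + k4 *\<^sub>R u4)"
  by (simp add: span_insert span_empty algebra_simps eq_diff_eq)

lemma lor_orth_span_4: "(\<forall>w\<in>span {u1, u2, u3, u4}. lor x w = 0) \<longleftrightarrow>
    lor x u1 = 0 \<and> lor x u2 = 0 \<and> lor x u3 = 0 \<and> lor x u4 = 0"
  by (auto simp: span_4 lor_add_right lor_scaleR_right intro: span_base)

lemma Vsp_Yt: "Vsp (Yt t) p = span {frm t Y0 p, frm t (Yu0 t) p, frm t Yv0 p, frm t (Yzzb0 t) p}"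
  unfolding Vsp_def pd_Yt_1 pd_Yt_i Yzzb_Yt by (simp add: Yt_frm)

lemma Vsp_Yt_mem: "x \<in> Vsp (Yt t) p \<longleftrightarrow>
    (\<exists>k1 k2 k3 k4. x = frm t (k1 *\<^sub>R Y0 + k2 *\<^sub>R Yu0 t + k3 *\<^sub>R Yv0 + k4 *\<^sub>R Yzzb0 t) p)"
  unfolding Vsp_Yt span_4 by (simp add: rot_add rot_scaleR)

lemma Vperp_Yt_frm: "frm t \<gamma> p \<in> Vperp (Yt t) p \<longleftrightarrow>
    lor \<gamma> Y0 = 0 \<and> lor \<gamma> (Yu0 t) = 0 \<and> lor \<gamma> Yv0 = 0 \<and> lor \<gamma> (Yzzb0 t) = 0"
  unfolding Vperp_def Vsp_Yt mem_Collect_eq lor_orth_span_4 lor_rot ..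

lemma cVperp_Yt_cfrm: "cfrm t \<alpha> \<beta> p \<in> cVperp (Yt t) p \<longleftrightarrow>
    frm t \<alpha> p \<in> Vperp (Yt t) p \<and> frm t \<beta> p \<in> Vperp (Yt t) p"
  and cVsp_Yt_cfrm: "cfrm t \<alpha> \<beta> p \<in> cVsp (Yt t) p \<longleftrightarrow>
    frm t \<alpha> p \<in> Vsp (Yt t) p \<and> frm t \<beta> p \<in> Vsp (Yt t) p"
  by (simp_all add: cVperp_def cVsp_def)

context
  fixes t :: real
  assumes t1: "t > 1"
begin

lemmas lor_simps_t = lor_simps[OF t1]

text \<open>V is nondegenerate: the Gram matrix of Y, Y_u, Y_v, Y_{z zbar} is invertible.\<close>

lemma Vsp_Yt_nondegenerate: "Vsp (Yt t) p \<inter> Vperp (Yt t) p \<subseteq> {0}"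
proof
  fix x assume x: "x \<in> Vsp (Yt t) p \<inter> Vperp (Yt t) p"
  then obtain k1 k2 k3 k4 where
    xk: "x = frm t (k1 *\<^sub>R Y0 + k2 *\<^sub>R Yu0 t + k3 *\<^sub>R Yv0 + k4 *\<^sub>R Yzzb0 t) p"
    using Vsp_Yt_mem by blast
  with x have "frm t (k1 *\<^sub>R Y0 + k2 *\<^sub>R Yu0 t + k3 *\<^sub>R Yv0 + k4 *\<^sub>R Yzzb0 t) p \<in> Vperp (Yt t) p"
    by simp
  then have "k4 = 0 \<and> k2 = 0 \<and> k3 = 0 \<and> k1 = 0"
    unfolding Vperp_Yt_frm by (simp add: lor_simps_t) auto
  then show "x \<in> {0}" using xk by simp
qed

section \<open>Conformality and the Hopf differential\<close>

lemma conformal_Yt: "conf_spacelike_lift (Yt t)"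
  unfolding conf_spacelike_lift_def
proof (intro conjI allI)
  show "smooth_map (Yt t)" by (simp add: Yt_frm smooth_rot)
  fix p
  have "lor (Yt t p) (frm t (Yzzb0 t) p) = -1/2"
    by (simp add: Yt_frm lor_rot lor_simps_t)
  then show "Yt t p \<noteq> 0" by auto
  show "lor (Yt t p) (Yt t p) = 0" by (simp add: Yt_frm lor_rot lor_simps_t)
  show "clor (Yz (Yt t) p) (Yz (Yt t) p) = 0"
    by (simp add: Yz_Yt clor_crot lor_simps_t complex_eq_iff)
  show "Im (clor (Yz (Yt t) p) (Yzb (Yt t) p)) = 0"
    by (simp add: Yz_Yt Yzb_Yt clor_crot lor_simps_t)
  show "Re (clor (Yz (Yt t) p) (Yzb (Yt t) p)) > 0"
    by (simp add: Yz_Yt Yzb_Yt clor_crot lor_simps_t)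
qed

lemma canonical_Yt: "canonical_lift (Yt t)"
  unfolding canonical_lift_def
  by (simp add: Yz_Yt Yzb_Yt clor_crot lor_simps_t complex_eq_iff)

lemma hopf_Yt: "hopf (Yt t) p = cfrm t 0 (kappa0 t) p"
  and sfun_Yt: "sfun (Yt t) p = complex_of_real (kb t * kb t / 2)"
proof -
  have "Yzzb (Yt t) p \<in> Vsp (Yt t) p" by (simp add: Vsp_def span_base)
  moreover have "lor (Yt t p) (Yzzb (Yt t) p) \<noteq> 0"
    unfolding Yzzb_Yt by (simp add: Yt_frm lor_rot lor_simps_t)
  moreover have "cfrm t 0 (kappa0 t) p \<in> cVperp (Yt t) p"
    by (simp add: cVperp_Yt_cfrm Vperp_Yt_frm lor_simps_t)
  moreover have "Yzz (Yt t) p = (- complex_of_real (kb t * kb t / 2) / 2) *s cvec (Yt t p) +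
      cfrm t 0 (kappa0 t) p"
    unfolding Yzz_Yt[OF t1] unfolding Yt_frm cvec_rot crot_smult crot_add
    by (rule crot_eqI) (simp_all add: field_simps)
  ultimately show "hopf (Yt t) p = cfrm t 0 (kappa0 t) p"
    and "sfun (Yt t) p = complex_of_real (kb t * kb t / 2)"
    by (rule Yzz_decomposition_unique)+
qed

lemma hopf_Yt_fun: "hopf (Yt t) = cfrm t 0 (kappa0 t)"
  by (simp add: fun_eq_iff hopf_Yt)

lemma Nvec_Yt: "Nvec (Yt t) p = frm t N0 p"
  unfolding Nvec_def pd_Yt_1 pd_Yt_i
proof (rule the_equality)
  have "frm t N0 p \<in> Vsp (Yt t) p"
    unfolding Vsp_Yt_mem N0_comb[OF t1] by blast
  then show "frm t N0 p \<in> Vsp (Yt t) p \<and> lor (frm t N0 p) (frm t (Yu0 t) p) = 0 \<and>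
      lor (frm t N0 p) (frm t Yv0 p) = 0 \<and> lor (frm t N0 p) (frm t N0 p) = 0 \<and>
      lor (frm t N0 p) (Yt t p) = - 1"
    by (simp add: lor_rot Yt_frm N0_def Y0_def Yu0_def Yv0_def)
next
  fix n assume n: "n \<in> Vsp (Yt t) p \<and> lor n (frm t (Yu0 t) p) = 0 \<and> lor n (frm t Yv0 p) = 0 \<and>
     lor n n = 0 \<and> lor n (Yt t p) = - 1"
  then obtain k1 k2 k3 k4 where
    nk: "n = frm t (k1 *\<^sub>R Y0 + k2 *\<^sub>R Yu0 t + k3 *\<^sub>R Yv0 + k4 *\<^sub>R Yzzb0 t) p"
    unfolding Vsp_Yt_mem by blast
  from n have k234: "k2 = 0" "k3 = 0" "k4 = 2"
    by (simp_all add: nk lor_rot lor_simps_t Yt_frm)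
  from n have "lor (k1 *\<^sub>R Y0 + k4 *\<^sub>R Yzzb0 t) (k1 *\<^sub>R Y0 + k4 *\<^sub>R Yzzb0 t) = 0"
    by (simp add: nk lor_rot k234)
  then have k1: "k1 = ka t * ka t / 2"
    using k234 by (simp add: lor_simps_t algebra_simps)
  show "n = frm t N0 p"
    unfolding nk k1 k234 N0_comb[OF t1] by simp
qed

section \<open>The Willmore equation\<close>

lemma frm_in_Vsp_Yt: "frm t (k1 *\<^sub>R Y0 + k2 *\<^sub>R Yu0 t + k3 *\<^sub>R Yv0 + k4 *\<^sub>R Yzzb0 t) p \<in> Vsp (Yt t) p"
  unfolding Vsp_Yt_mem by blast

text \<open>D_zbar kappa = (ka kb/4) F(w) F0: the derivative kappa_zbar splits into this normal
  part and the tangent part -(ka^2/4) F(w)(Yu0 - i Yv0).\<close>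

lemma Dzb_hopf_Yt: "Dzb (Yt t) (hopf (Yt t)) = cfrm t ((ka t * kb t / 4) *\<^sub>R F0 t) 0"
proof
  fix p
  have tangent: "dzb (hopf (Yt t)) p - cfrm t ((ka t * kb t / 4) *\<^sub>R F0 t) 0 p =
      cfrm t ((- (ka t * ka t / 4)) *\<^sub>R Yu0 t) ((ka t * ka t / 4) *\<^sub>R Yv0) p"
  proof -
    have "ka t * (ka t * kb t) = kb t + kb t * (kb t * kb t)"
      and "ka t * (ka t * ka t) = ka t + ka t * (kb t * kb t)"
      using ka_sq[OF t1] by algebra+
    then show ?thesis
      unfolding hopf_Yt_fun dzb_crot crot_diff
      by (intro crot_eqI) (simp_all add: kappa0_def F0_def Yu0_def Yv0_def field_simps)
  qed
  show "Dzb (Yt t) (hopf (Yt t)) p = cfrm t ((ka t * kb t / 4) *\<^sub>R F0 t) 0 p"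
    unfolding Dzb_def
  proof (rule projperp_unique[OF Vsp_Yt_nondegenerate])
    show "cfrm t ((ka t * kb t / 4) *\<^sub>R F0 t) 0 p \<in> cVperp (Yt t) p"
      by (simp add: cVperp_Yt_cfrm Vperp_Yt_frm lor_simps_t)
    show "dzb (hopf (Yt t)) p - cfrm t ((ka t * kb t / 4) *\<^sub>R F0 t) 0 p \<in> cVsp (Yt t) p"
      unfolding tangent cVsp_Yt_cfrm
      using frm_in_Vsp_Yt[of 0 "- (ka t * ka t / 4)" 0 0] frm_in_Vsp_Yt[of 0 0 "ka t * ka t / 4" 0]
      by simp
  qed
qed

text \<open>D_zbar D_zbar kappa = i (ka kb^2/8) F(w) E0; the tangent part is a multiple of Y.\<close>

lemma Dzb_Dzb_hopf_Yt:
  "Dzb (Yt t) (Dzb (Yt t) (hopf (Yt t))) p = cfrm t 0 ((ka t * kb t * kb t / 8) *\<^sub>R E0) p"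
proof -
  have tangent: "dzb (cfrm t ((ka t * kb t / 4) *\<^sub>R F0 t) 0) p -
        cfrm t 0 ((ka t * kb t * kb t / 8) *\<^sub>R E0) p =
      cfrm t ((- (ka t * ka t * kb t * kb t / 8)) *\<^sub>R Y0) 0 p"
    unfolding dzb_crot crot_diff
    by (intro crot_eqI) (simp_all add: F0_def E0_def Y0_def field_simps mk6_zero[symmetric])
  show ?thesis
    unfolding Dzb_hopf_Yt Dzb_def
  proof (rule projperp_unique[OF Vsp_Yt_nondegenerate])
    show "cfrm t 0 ((ka t * kb t * kb t / 8) *\<^sub>R E0) p \<in> cVperp (Yt t) p"
      by (simp add: cVperp_Yt_cfrm Vperp_Yt_frm lor_simps_t)
    show "dzb (cfrm t ((ka t * kb t / 4) *\<^sub>R F0 t) 0) p -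
        cfrm t 0 ((ka t * kb t * kb t / 8) *\<^sub>R E0) p \<in> cVsp (Yt t) p"
      unfolding tangent cVsp_Yt_cfrm
      using frm_in_Vsp_Yt[of "- (ka t * ka t * kb t * kb t / 8)" 0 0 0] frm_in_Vsp_Yt[of 0 0 0 0]
      by simp
  qed
qed

lemma willmore_Yt: "willmore_lift (Yt t)"
  unfolding willmore_lift_def
proof
  fix p
  show "Dzb (Yt t) (Dzb (Yt t) (hopf (Yt t))) p + (cnj (sfun (Yt t) p) / 2) *s hopf (Yt t) p = 0"
    unfolding Dzb_Dzb_hopf_Yt sfun_Yt hopf_Yt crot_smult crot_add
    by (simp add: E0_def kappa0_def crot_zero mk6_zero[symmetric] field_simps)
qed

text \<open>At the origin D_zbar kappa is nonzero only in coordinates 3 and 6, while kappa is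
  nonzero only in coordinate 4; so the two are linearly independent.\<close>

lemma not_s_willmore_Yt: "\<not> s_willmore_lift (Yt t)"
proof
  assume "s_willmore_lift (Yt t)"
  then obtain a b where ab: "(a, b) \<noteq> (0, 0)" and
    dep: "a *s Dzb (Yt t) (hopf (Yt t)) 0 + b *s hopf (Yt t) 0 = 0"
    unfolding s_willmore_lift_def by blast
  have "(a *s Dzb (Yt t) (hopf (Yt t)) 0 + b *s hopf (Yt t) 0) $ 3 = 0"
    and "(a *s Dzb (Yt t) (hopf (Yt t)) 0 + b *s hopf (Yt t) 0) $ 4 = 0"
    using dep by simp_all
  then have "a * complex_of_real (ka t * kb t * kb t / 4) = 0"
    and "b * Complex 0 (- ka t / 2) = 0"
    unfolding Dzb_hopf_Yt hopf_Yt
    by (simp_all add: crot_nth F0_def kappa0_def Complex_eq)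
  then have "a = 0" "b = 0"
    using ka_pos[OF t1] kb_pos[OF t1] by (simp_all add: complex_eq_iff)
  with ab show False by simp
qed

lemma null_frame_Yt: "smooth_map (frm t (L0 t)) \<and> smooth_map (frm t (R0 t)) \<and>
   (\<forall>p. frm t (L0 t) p \<in> Vperp (Yt t) p \<and> frm t (R0 t) p \<in> Vperp (Yt t) p \<and>
        lor (frm t (L0 t) p) (frm t (L0 t) p) = 0 \<and> lor (frm t (R0 t) p) (frm t (R0 t) p) = 0 \<and>
        lor (frm t (L0 t) p) (frm t (R0 t) p) = -1)"
  by (simp add: smooth_rot Vperp_Yt_frm lor_simps_t lor_rot)

text \<open>kappa = i F(w) kappa0 = -(i ka / (2 sqrt 2)) (L - R), since L0 - R0 = sqrt 2 E0.\<close>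

lemma hopf_Yt_null_frame: "hopf (Yt t) w =
   (- \<i> * complex_of_real t / complex_of_real (2 * sqrt 2 * sqrt (t\<^sup>2 - 1))) *s
     cvec (frm t (L0 t) w - frm t (R0 t) w)"
proof -
  have coeff: "- \<i> * complex_of_real t / complex_of_real (2 * sqrt 2 * sqrt (t\<^sup>2 - 1)) =
      Complex 0 (- (ka t / (2 * sqrt 2)))"
    by (simp add: complex_eq_iff ka_def)
  show ?thesis
    unfolding hopf_Yt coeff rot_diff[symmetric] cvec_rot crot_smult
    by (rule crot_eqI) (simp_all add: kappa0_def L0_def R0_def field_simps mk6_zero[symmetric])
qed

end

section \<open>Orientation: the moving isometry has determinant 1\<close>

lemma continuous_sign_const:
  fixes g :: "'a::real_normed_vector \<Rightarrow> real"
  assumes cont: "continuous_on UNIV g" and sq: "\<And>x. g x * g x = 1" and g0: "g 0 = 1"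
  shows "g x = 1"
proof (rule ccontr)
  assume "g x \<noteq> 1"
  then have gx: "g x = -1" using sq[of x] by (metis mult_cancel_left1 square_eq_1_iff)
  define h where "h s = g (s *\<^sub>R x)" for s :: real
  have "continuous_on {0..1} h"
    unfolding h_def by (rule continuous_on_compose2[OF cont]) (auto intro!: continuous_intros)
  moreover have "h 1 \<le> 0" "0 \<le> h 0" using gx g0 by (simp_all add: h_def)
  ultimately obtain s where "h s = 0" using IVT2'[of h 1 0 0] by auto
  then show False using sq[of "s *\<^sub>R x"] by (simp add: h_def)
qed

text \<open>The matrix of rot w (rows are images of the standard basis) preserves the form
  J = diag(1,1,1,1,-1,-1), hence det^2 = 1, and it is the identity at w = 0.\<close>

definition rot_matrix :: "real \<Rightarrow> real \<Rightarrow> complex \<Rightarrow> real^6^6" where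
  "rot_matrix m n w = (\<chi> i. rot m n (axis i 1) w)"

definition Jm :: "real^6^6" where "Jm = (\<chi> i j. if i = j then sig i else 0)"

lemma rows_rot_matrix: "mk6 (rot m n r1 w) (rot m n r2 w) (rot m n r3 w) (rot m n r4 w)
    (rot m n r5 w) (rot m n r6 w) = mk6 r1 r2 r3 r4 r5 r6 ** rot_matrix m n w"
proof -
  have "x v* rot_matrix m n w = rot m n x w" for x
    by (simp add: vec_eq6 vector_matrix_mult_def rot_matrix_def sum_6 rot_def Let_def axis_def
        algebra_simps)
  moreover have "(A ** B) $ i = (A $ i) v* B" for A B :: "real^6^6" and i
    by (simp add: matrix_matrix_mult_def vector_matrix_mult_def vec_eq_iff mult.commute)
  ultimately show ?thesis by (simp add: vec_eq6)
qed

lemma det_Jm: "det Jm = 1"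
proof -
  have "det Jm = prod (\<lambda>i. Jm$i$i) (UNIV::6 set)"
    by (rule det_diagonal) (simp add: Jm_def)
  also have "\<dots> = prod sig UNIV" by (simp add: Jm_def)
  also have "\<dots> = sig 1 * sig 2 * sig 3 * sig 4 * sig 5 * sig 6"
    unfolding UNIV_6 by simp
  finally show ?thesis by simp
qed

lemma rot_matrix_isometry: "rot_matrix m n w ** Jm ** transpose (rot_matrix m n w) = Jm"
proof -
  have lor_axis: "lor (axis i 1) (axis j 1) = (if i = j then sig i else 0)" for i j
  proof -
    have "lor (axis i 1) (axis j 1) = (\<Sum>k\<in>UNIV. if k = i then (if k = j then sig k else 0) else 0)"
      unfolding lor_def by (rule sum.cong) (auto simp: axis_def)
    then show ?thesis by simp
  qed
  have J: "(A ** Jm) $ i $ k = A $ i $ k * sig k" for A :: "real^6^6" and i k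
    unfolding matrix_matrix_mult_def Jm_def by (simp add: if_distrib cong: if_cong)
  have "(rot_matrix m n w ** Jm ** transpose (rot_matrix m n w)) $ i $ j =
      lor (rot_matrix m n w $ i) (rot_matrix m n w $ j)" for i j
    unfolding matrix_matrix_mult_def[of "rot_matrix m n w ** Jm"] lor_def
    by (simp add: J transpose_def algebra_simps)
  then show ?thesis
    by (simp add: vec_eq_iff rot_matrix_def lor_rot lor_axis Jm_def)
qed

lemma det_rot_matrix: "det (rot_matrix m n w) = 1"
proof (rule continuous_sign_const[where g = "\<lambda>w. det (rot_matrix m n w)"])
  have "continuous_on UNIV (rot m n \<alpha>)" for \<alpha>
    by (meson rot_has_derivative continuous_at_imp_continuous_on has_derivative_continuous)
  then show "continuous_on UNIV (\<lambda>w. det (rot_matrix m n w))"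
    unfolding det_def rot_matrix_def by (intro continuous_intros continuous_on_component)
  show "det (rot_matrix m n w) * det (rot_matrix m n w) = 1" for w
    using arg_cong[OF rot_matrix_isometry[of m n w], of det] by (simp add: det_mul det_Jm)
  have "rot_matrix m n 0 = mat 1"
    by (simp add: rot_matrix_def vec_eq_iff mat_def axis_def)
  then show "det (rot_matrix m n 0) = 1" by simp
qed

lemma det_frame_pattern: "det (mk6 (mk6 1 0 0 0 1 0) (mk6 0 0 a 0 0 b) (mk6 0 1 0 0 0 0)
   (mk6 (-1/2) 0 0 0 (1/2) 0) (mk6 0 0 x y 0 z) (mk6 0 0 u v 0 w) :: real^6^6) =
   a * (w * y - v * z) + b * (v * x - u * y)"
proof -
  have f1: "finite {2::6, 3, 4, 5, 6}" "1 \<notin> {2::6, 3, 4, 5, 6}" by auto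
  have f2: "finite {3::6, 4, 5, 6}" "2 \<notin> {3::6, 4, 5, 6}" by auto
  have f3: "finite {4::6, 5, 6}" "3 \<notin> {4::6, 5, 6}" by auto
  have f4: "finite {5::6, 6}" "4 \<notin> {5::6, 6}" by auto
  have f5: "finite {6::6}" "5 \<notin> {6::6}" by auto
  show ?thesis
    unfolding det_def UNIV_6 sum_over_permutations_insert[OF f1] sum_over_permutations_insert[OF f2]
      sum_over_permutations_insert[OF f3] sum_over_permutations_insert[OF f4]
      sum_over_permutations_insert[OF f5] permutes_sing
    by (simp add: sign_swap_id permutation_swap_id sign_compose permutation_compose swap_id_eq
        algebra_simps)
qed

lemma orientation_Yt:
  assumes t1: "t > 1"
  shows "det (mk6 (Yt t p) (pd (Yt t) 1 p) (pd (Yt t) \<i> p) (Nvec (Yt t) p)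
            (frm t (R0 t) p) (frm t (L0 t) p)) > 0"
proof -
  have "det (mk6 (Yt t p) (pd (Yt t) 1 p) (pd (Yt t) \<i> p) (Nvec (Yt t) p) (frm t (R0 t) p) (frm t (L0 t) p))
     = det (mk6 Y0 (Yu0 t) Yv0 N0 (R0 t) (L0 t) ** rot_matrix (ka t) (kb t) p)"
    unfolding pd_Yt_1 pd_Yt_i Nvec_Yt[OF t1] unfolding Yt_frm rows_rot_matrix ..
  also have "\<dots> = det (mk6 Y0 (Yu0 t) Yv0 N0 (R0 t) (L0 t))"
    by (simp add: det_mul det_rot_matrix)
  also have "\<dots> = ka t * ka t - kb t * kb t"
    unfolding Y0_def Yu0_def Yv0_def N0_def R0_def L0_def det_frame_pattern
    by (simp add: field_simps)
  also have "\<dots> = 1" using ka_sq[OF t1] by simp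
  finally show ?thesis by simp
qed

lemma null_normal_frame_Yt:
  assumes t1: "t > 1"
  shows "\<exists>L R. null_normal_frame (Yt t) L R \<and>
            (\<forall>w. hopf (Yt t) w =
                 (- \<i> * complex_of_real t / complex_of_real (2 * sqrt 2 * sqrt (t\<^sup>2 - 1)))
                   *s cvec (L w - R w))"
  unfolding null_normal_frame_def
  using null_frame_Yt[OF t1] orientation_Yt[OF t1] hopf_Yt_null_frame[OF t1] by blast

section \<open>The tori and their Willmore functional\<close>

lemma rot_period_re:
  assumes "m * A = 2 * pi * real k" "n * A = 2 * pi * real l"
  shows "rot m n \<alpha> (w + Complex A 0) = rot m n \<alpha> w"
proof -
  have "m * (Re w + A) = m * Re w + 2 * pi * real k" "n * (Re w + A) = n * Re w + 2 * pi * real l"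
    using assms by (simp_all add: distrib_left)
  moreover have "cos (x + 2 * pi * real j) = cos x" "sin (x + 2 * pi * real j) = sin x" for x j
    by (simp_all add: cos_add sin_add cos_integer_2pi sin_integer_2pi)
  ultimately show ?thesis by (simp add: rot_def Let_def)
qed

lemma rot_period_im: "rot m n \<alpha> (w + Complex 0 (2 * pi)) = rot m n \<alpha> w"
proof -
  have "cos (2 * pi + x) = cos x" "sin (2 * pi + x) = sin x" for x
    by (simp_all add: add.commute[of "2*pi"])
  then show ?thesis by (simp add: rot_def Let_def)
qed

text \<open>If both speeds close up after the horizontal period A, Y_t itself (not only its
  projective class) is doubly periodic.\<close>

lemma descends_Yt:
  assumes "ka t * A = 2 * pi * real k" "kb t * A = 2 * pi * real l"
  shows "descends (Yt t) A (2 * pi)"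
  unfolding descends_def Yt_frm
  using rot_period_re[OF assms] rot_period_im by (metis one_neq_zero scaleR_one)

text \<open>The density <kappa, conj kappa> = ka^2/4 is constant, so W is area times ka^2/4.\<close>

lemma willmore_rect_Yt:
  assumes t1: "t > 1" and "A \<ge> 0" "B \<ge> 0"
  shows "willmore_rect (Yt t) A B = complex_of_real (A * B * (ka t * ka t) / 4)"
proof -
  have density: "(\<lambda>w. clor (hopf (Yt t) w) (vcnj (hopf (Yt t) w)) * (- 2 * \<i>)) =
        (\<lambda>w. complex_of_real (ka t * ka t / 4) * (- 2 * \<i>))"
    by (simp add: fun_eq_iff hopf_Yt[OF t1] vcnj_crot clor_crot lor_minus_right kappa0_def
        complex_eq_iff)
  have area: "Henstock_Kurzweil_Integration.content (cbox 0 (Complex A B)) = A * B"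
    using assms by (simp add: content_cbox_if Basis_complex_def inner_complex_def box_eq_empty)
  show ?thesis
    unfolding willmore_rect_def density integral_const area
    by (simp add: scaleR_conv_of_real complex_eq_iff)
qed

lemma sqrt_ratio:
  fixes p q :: nat
  assumes "1 \<le> q" "q < p"
  shows "sqrt ((real p / real q)\<^sup>2 - 1) = sqrt ((real p)\<^sup>2 - (real q)\<^sup>2) / real q"
proof -
  have "(real p / real q)\<^sup>2 - 1 = ((real p)\<^sup>2 - (real q)\<^sup>2) / (real q)\<^sup>2"
    using assms by (simp add: field_simps power2_eq_square)
  then show ?thesis by (simp add: real_sqrt_divide)
qed

text \<open>For t = p/q the horizontal period 2 pi q sqrt(t^2 - 1) closes both rotations
  (after p and q turns), and W = p^2 pi^2 / sqrt(p^2 - q^2).\<close>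

lemma torus_Yt:
  fixes p q :: nat
  assumes "1 \<le> q" "q < p" and t: "t = real p / real q"
  shows "descends (Yt t) (2 * pi * real q * sqrt (t\<^sup>2 - 1)) (2 * pi)"
    and "willmore_rect (Yt t) (2 * pi * real q * sqrt (t\<^sup>2 - 1)) (2 * pi) =
           complex_of_real ((real p)\<^sup>2 / sqrt ((real p)\<^sup>2 - (real q)\<^sup>2) * pi\<^sup>2)"
proof -
  have t1: "t > 1" and tq: "t * real q = real p" and q0: "real q > 0"
    using assms by simp_all
  have s: "sqrt (t\<^sup>2 - 1) > 0" by (rule sqrt_t_pos[OF t1])
  show "descends (Yt t) (2 * pi * real q * sqrt (t\<^sup>2 - 1)) (2 * pi)"
  proof (rule descends_Yt)
    show "ka t * (2 * pi * real q * sqrt (t\<^sup>2 - 1)) = 2 * pi * real p"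
      using s tq by (simp add: ka_def field_simps)
    show "kb t * (2 * pi * real q * sqrt (t\<^sup>2 - 1)) = 2 * pi * real q"
      using s by (simp add: kb_def field_simps)
  qed
  have d: "sqrt ((real p)\<^sup>2 - (real q)\<^sup>2) > 0" using assms by (simp add: power_strict_mono)
  have "willmore_rect (Yt t) (2 * pi * real q * sqrt (t\<^sup>2 - 1)) (2 * pi) =
        complex_of_real (2 * pi * real q * sqrt (t\<^sup>2 - 1) * (2 * pi) * (ka t * ka t) / 4)"
    using s by (intro willmore_rect_Yt[OF t1]) simp_all
  also have "2 * pi * real q * sqrt (t\<^sup>2 - 1) * (2 * pi) * (ka t * ka t) / 4 =
      (real p)\<^sup>2 / sqrt ((real p)\<^sup>2 - (real q)\<^sup>2) * pi\<^sup>2"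
    unfolding ka_def t sqrt_ratio[OF assms(1,2)] using q0 d by (simp add: field_simps power2_eq_square)
  finally show "willmore_rect (Yt t) (2 * pi * real q * sqrt (t\<^sup>2 - 1)) (2 * pi) =
           complex_of_real ((real p)\<^sup>2 / sqrt ((real p)\<^sup>2 - (real q)\<^sup>2) * pi\<^sup>2)" .
qed

text \<open>Among 1 <= q < p, the value p^2 / sqrt(p^2 - q^2) is minimal for p = 2, q = 1:
  for p >= 3 it is at least p >= 3 > 4 / sqrt 3.\<close>

lemma willmore_value_lower_bound:
  fixes p q :: nat
  assumes "1 \<le> q" "q < p"
  shows "(real p)\<^sup>2 / sqrt ((real p)\<^sup>2 - (real q)\<^sup>2) \<ge> 4 / sqrt 3"
proof (cases "p = 2")
  case True
  then have "q = 1" using assms by simp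
  then show ?thesis using True by simp
next
  case False
  then have p3: "p \<ge> 3" using assms by simp
  have d: "(real p)\<^sup>2 - (real q)\<^sup>2 > 0" using assms by (simp add: power_strict_mono)
  have "sqrt ((real p)\<^sup>2 - (real q)\<^sup>2) \<le> sqrt ((real p)\<^sup>2)"
    by (rule real_sqrt_le_mono) simp
  then have "sqrt ((real p)\<^sup>2 - (real q)\<^sup>2) \<le> real p" by simp
  then have "real p \<le> (real p)\<^sup>2 / sqrt ((real p)\<^sup>2 - (real q)\<^sup>2)"
    using d p3 by (simp add: field_simps power2_eq_square mult_left_mono)
  moreover have "4 / sqrt 3 \<le> (3::real)"
  proof -
    have "(4::real) \<le> 3 * (3/2)" by simp
    also have "3/2 \<le> sqrt (3::real)" by (rule real_le_rsqrt) (simp add: power2_eq_square)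
    finally show ?thesis by (simp add: field_simps)
  qed
  moreover have "(3::real) \<le> real p" using p3 by simp
  ultimately show ?thesis by linarith
qed

lemma willmore_torus_lower_bound:
  "\<forall>p q :: nat. coprime p q \<and> 1 \<le> q \<and> q < p \<longrightarrow>
     Re (willmore_rect (Yt (real p / real q))
           (2 * pi * real q * sqrt ((real p / real q)\<^sup>2 - 1)) (2 * pi)) \<ge> 4 / sqrt 3 * pi\<^sup>2"
proof (intro allI impI)
  fix p q :: nat
  assume pq: "coprime p q \<and> 1 \<le> q \<and> q < p"
  then have "4 / sqrt 3 * pi\<^sup>2 \<le> (real p)\<^sup>2 / sqrt ((real p)\<^sup>2 - (real q)\<^sup>2) * pi\<^sup>2"
    using willmore_value_lower_bound[of q p] by (intro mult_right_mono) auto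
  then show "Re (willmore_rect (Yt (real p / real q))
           (2 * pi * real q * sqrt ((real p / real q)\<^sup>2 - 1)) (2 * pi)) \<ge> 4 / sqrt 3 * pi\<^sup>2"
    using torus_Yt(2)[of q p] pq by simp
qed

lemma willmore_torus_minimum_attained:
  "\<exists>p q :: nat. coprime p q \<and> 1 \<le> q \<and> q < p \<and>
     willmore_rect (Yt (real p / real q))
       (2 * pi * real q * sqrt ((real p / real q)\<^sup>2 - 1)) (2 * pi) = complex_of_real (4 / sqrt 3 * pi\<^sup>2)"
proof (intro exI conjI)
  show "willmore_rect (Yt (real 2 / real 1)) (2 * pi * real 1 * sqrt ((real 2 / real 1)\<^sup>2 - 1)) (2 * pi)
      = complex_of_real (4 / sqrt 3 * pi\<^sup>2)"
    using torus_Yt(2)[of 1 2] by simp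
qed simp_all

theorem mainTheorem12:
  fixes t :: real
  assumes "t > 1"
  shows "conf_spacelike_lift (Yt t) \<and> canonical_lift (Yt t) \<and>
         willmore_lift (Yt t) \<and> \<not> s_willmore_lift (Yt t) \<and>
         (\<exists>L R. null_normal_frame (Yt t) L R \<and>
            (\<forall>w. hopf (Yt t) w =
                 (- \<i> * complex_of_real t / complex_of_real (2 * sqrt 2 * sqrt (t\<^sup>2 - 1)))
                   *s cvec (L w - R w))) \<and>
         (\<forall>p q :: nat. coprime p q \<and> 1 \<le> q \<and> q < p \<and> t = real p / real q \<longrightarrow>
            descends (Yt t) (2 * pi * real q * sqrt (t\<^sup>2 - 1)) (2 * pi) \<and>
            willmore_rect (Yt t) (2 * pi * real q * sqrt (t\<^sup>2 - 1)) (2 * pi) =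
              complex_of_real ((real p)\<^sup>2 / sqrt ((real p)\<^sup>2 - (real q)\<^sup>2) * pi\<^sup>2)) \<and>
         (\<forall>p q :: nat. coprime p q \<and> 1 \<le> q \<and> q < p \<longrightarrow>
            Re (willmore_rect (Yt (real p / real q))
                  (2 * pi * real q * sqrt ((real p / real q)\<^sup>2 - 1)) (2 * pi))
              \<ge> 4 / sqrt 3 * pi\<^sup>2) \<and>
         (\<exists>p q :: nat. coprime p q \<and> 1 \<le> q \<and> q < p \<and>
            willmore_rect (Yt (real p / real q))
                  (2 * pi * real q * sqrt ((real p / real q)\<^sup>2 - 1)) (2 * pi)
              = complex_of_real (4 / sqrt 3 * pi\<^sup>2))"
proof -
  have tori: "\<forall>p q :: nat. coprime p q \<and> 1 \<le> q \<and> q < p \<and> t = real p / real q \<longrightarrow>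
      descends (Yt t) (2 * pi * real q * sqrt (t\<^sup>2 - 1)) (2 * pi) \<and>
      willmore_rect (Yt t) (2 * pi * real q * sqrt (t\<^sup>2 - 1)) (2 * pi) =
        complex_of_real ((real p)\<^sup>2 / sqrt ((real p)\<^sup>2 - (real q)\<^sup>2) * pi\<^sup>2)"
    using torus_Yt by blast
  show ?thesis
    by (intro conjI conformal_Yt[OF assms] canonical_Yt[OF assms] willmore_Yt[OF assms]
        not_s_willmore_Yt[OF assms] null_normal_frame_Yt[OF assms] tori
        willmore_torus_lower_bound willmore_torus_minimum_attained)
qed

end
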